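(* In the ladder model, the density $\rho_\infty$ of the stationary distribution of $(\Delta_n)_{n\ge0}$ satisfies $$\rho_\infty''(d)=-\bigl[2+e^{d}\bigr]\rho_\infty(d)+3\rho_\infty'(d)\quad (d<0),$$ $$\rho_\infty''(d)=-\bigl[2+e^{-d}\bigr]\rho_\infty(d)-3\rho_\infty'(d)\quad (d\ge0).$$
   Context: Ladder model $\mathcal{G}^{\{\mathcal{X},\mathcal{Y},\mathcal{Z}\}}$: for $n\ge0$, $G_n$ has vertex set $\{0,\dots,n\}\times\{0,1\}$ and edges: for $1\le i\le n$, an edge with weight $X_i$ joining $(i-1,0)$ and $(i,0)$, an edge with weight $Y_i$ joining $(i-1,1)$ and $(i,1)$; for $0\le i\le n$, an edge with weight $Z_i$ joining $(i,0)$ and $(i,1)$. All weights are independent standard exponential random variables. Path weight = sum of edge weights. $l_n$ ($l_n'$) is the minimal weight of a path in $G_n$ from $(0,0)$ to $(n,0)$ (to $(n,1)$), and $\Delta_n=l_n'-l_n$; $(\Delta_n)$ is an ergodic Markov chain given by $\Delta_0$ standard exponential and $\Delta_n=\min\{\Delta_{n-1}+Y_n,X_n+Z_n\}-\min\{X_n,\Delta_{n-1}+Y_n+Z_n\}$, and $\rho_\infty$ is the density of its unique stationary distribution. *)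

theory Defs
  imports "HOL-Probability.Probability"
begin

definition ladder_step :: "real \<Rightarrow> real \<Rightarrow> real \<Rightarrow> real \<Rightarrow> real" where
  "ladder_step d x y z = min (d + y) (x + z) - min x (d + y + z)"

definition Exp1 :: "real measure" where
  "Exp1 = density lborel (exponential_density 1)"

definition ladder_stationary :: "real measure \<Rightarrow> bool" where
  "ladder_stationary M \<longleftrightarrow> prob_space M \<and> sets M = sets borel \<and>
     distr (M \<Otimes>\<^sub>M (Exp1 \<Otimes>\<^sub>M (Exp1 \<Otimes>\<^sub>M Exp1))) borel
       (\<lambda>(d, x, y, z). ladder_step d x y z) = M"

definition ladder_stationary_density :: "(real \<Rightarrow> real) \<Rightarrow> bool" where
  "ladder_stationary_density \<rho> \<longleftrightarrow> \<rho> \<in> borel_measurable lborel \<and> (\<forall>x. 0 \<le> \<rho> x) \<and>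
     ladder_stationary (density lborel (\<lambda>x. ennreal (\<rho> x)))"

end

theory Submission
  imports Defs
begin

(*
  Conditionally on Delta_{n-1} = d, the next state is obtained by clamping
  w = d + Y - X to the interval [-Z, Z].  Since Y - X has the Laplace density e^{-|w|}/2,
  the one-step transition law from d has an explicit Lebesgue density k(d, t)
  ("step_kernel").  Stationarity of a density rho therefore says rho(t) = rho0(t) for almost
  every t, where rho0(t) = \<integral> rho(d) k(d,t) dd.  For t >= 0 one computes
    rho0(t) = e^{-2t} \<integral>_{s<=t} rho(s) e^s ds + e^{-t} \<integral>_{s>t} rho(s) ds,
  and symmetrically for t < 0.  The integrands may be replaced by rho0 (they agree a.e.),
  which makes rho0 continuous; the fundamental theorem of calculus then differentiates
  rho0 twice, and the ODE is an algebraic identity between the resulting expressions.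
*)


section \<open>Exponential and Laplace integrals\<close>

definition exp_dens :: "real \<Rightarrow> ennreal" where
  "exp_dens z = ennreal (exp (-z)) * indicator {0..} z"

lemma exp_dens_measurable[measurable]: "exp_dens \<in> borel_measurable borel"
  unfolding exp_dens_def by measurable

lemma nn_integral_exp_tail:
  assumes "a > 0"
  shows "(\<integral>\<^sup>+x. ennreal (exp (-a*x)) * indicator {c..} x \<partial>lborel) = ennreal (exp (-a*c)/a)"
proof -
  have "integral\<^sup>N lborel (\<lambda>x. indicator {c..} x * exp (-a*x)) = exp (-a*c)/a"
    by (rule nn_integral_has_integral_lebesgue)
       (use has_integral_exp_minus_to_infinity[OF assms, of c] in auto)
  then show ?thesis
    by (simp add: mult.commute ennreal_mult' ennreal_indicator)
qed

lemma nn_integral_exp1_tail: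
  "(\<integral>\<^sup>+x. ennreal (exp (-x)) * indicator {c..} x \<partial>lborel) = ennreal (exp (-c))"
  using nn_integral_exp_tail[of 1 c] by simp

text \<open>Density of the Laplace distribution, the law of the difference of two independent
  standard exponential variables.\<close>
definition laplace_dens :: "real \<Rightarrow> real" where
  "laplace_dens u = exp (-\<bar>u\<bar>) / 2"

lemma laplace_dens_measurable[measurable]: "laplace_dens \<in> borel_measurable borel"
  unfolding laplace_dens_def by measurable

lemma laplace_convolution:
  "(\<integral>\<^sup>+x. exp_dens x * exp_dens (u + x) \<partial>lborel) = ennreal (laplace_dens u)"
proof -
  define c where "c = max 0 (-u)"
  have "(\<integral>\<^sup>+x. exp_dens x * exp_dens (u + x) \<partial>lborel) =
        (\<integral>\<^sup>+x. ennreal (exp (-2*x)) * indicator {c..} x * ennreal (exp (-u)) \<partial>lborel)"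
    by (rule nn_integral_cong)
       (auto simp: exp_dens_def c_def indicator_def ennreal_mult'[symmetric]
                   exp_add[symmetric] algebra_simps)
  also have "\<dots> = (\<integral>\<^sup>+x. ennreal (exp (-2*x)) * indicator {c..} x \<partial>lborel) * ennreal (exp (-u))"
    by (rule nn_integral_multc) auto
  also have "\<dots> = ennreal (exp (-2*c)/2 * exp (-u))"
    using nn_integral_exp_tail[of 2 c] by (simp add: ennreal_mult'[symmetric])
  also have "exp (-2*c)/2 * exp (-u) = laplace_dens u"
    by (auto simp: c_def laplace_dens_def max_def abs_if mult_exp_exp[symmetric])
       (simp add: exp_add[symmetric] algebra_simps)?
  finally show ?thesis .
qed

lemma exp_difference_integral:
  assumes [measurable]: "F \<in> borel_measurable borel"
  shows "(\<integral>\<^sup>+x. exp_dens x * (\<integral>\<^sup>+y. exp_dens y * F (d + y - x) \<partial>lborel) \<partial>lborel) =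
         (\<integral>\<^sup>+w. ennreal (laplace_dens (w - d)) * F w \<partial>lborel)"
proof -
  have shift: "(\<integral>\<^sup>+y. exp_dens y * F (d + y - x) \<partial>lborel) =
      (\<integral>\<^sup>+w. exp_dens (w - d + x) * F w \<partial>lborel)" for x
    using nn_integral_real_affine[of "\<lambda>w. exp_dens (w - d + x) * F w" 1 "d - x"]
    by (simp add: algebra_simps)
  have "(\<integral>\<^sup>+x. exp_dens x * (\<integral>\<^sup>+y. exp_dens y * F (d + y - x) \<partial>lborel) \<partial>lborel) =
        (\<integral>\<^sup>+x. (\<integral>\<^sup>+w. exp_dens x * (exp_dens (w - d + x) * F w) \<partial>lborel) \<partial>lborel)"
    unfolding shift by (rule nn_integral_cong) (rule nn_integral_cmult[symmetric], measurable)
  also have "\<dots> = (\<integral>\<^sup>+w. (\<integral>\<^sup>+x. exp_dens x * (exp_dens (w - d + x) * F w) \<partial>lborel) \<partial>lborel)"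
    by (rule lborel_pair.Fubini'[symmetric]) measurable
  also have "\<dots> = (\<integral>\<^sup>+w. (\<integral>\<^sup>+x. exp_dens x * exp_dens ((w - d) + x) \<partial>lborel) * F w \<partial>lborel)"
    by (rule nn_integral_cong, subst nn_integral_multc[symmetric]) (auto simp: mult.assoc)
  also have "\<dots> = (\<integral>\<^sup>+w. ennreal (laplace_dens (w - d)) * F w \<partial>lborel)"
    by (simp add: laplace_convolution)
  finally show ?thesis .
qed

definition laplace_tail :: "real \<Rightarrow> real" where
  "laplace_tail u = (if u \<ge> 0 then exp (-u)/2 else 1 - exp u/2)"

definition laplace_cdf :: "real \<Rightarrow> real" where
  "laplace_cdf u = laplace_tail (- u)"

lemma laplace_tail_nonneg: "0 \<le> laplace_tail u"
  unfolding laplace_tail_def using exp_le_one_iff[of u] by (auto, linarith)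

lemma laplace_tail_measurable[measurable]: "laplace_tail \<in> borel_measurable borel"
  unfolding laplace_tail_def by measurable

lemma laplace_cdf_measurable[measurable]: "laplace_cdf \<in> borel_measurable borel"
  unfolding laplace_cdf_def by measurable

lemma ennreal_half: "0 \<le> a \<Longrightarrow> ennreal (a/2) = ennreal a * ennreal (1/2)"
  by (subst ennreal_mult[symmetric]) auto

lemma laplace_upper_nonneg:
  assumes "u \<ge> 0"
  shows "(\<integral>\<^sup>+v. ennreal (laplace_dens v) * indicator {u<..} v \<partial>lborel) = ennreal (exp (-u)/2)"
proof -
  have "(\<integral>\<^sup>+v. ennreal (laplace_dens v) * indicator {u<..} v \<partial>lborel) =
        (\<integral>\<^sup>+v. ennreal (exp (-v)) * indicator {u..} v * ennreal (1/2) \<partial>lborel)"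
    using AE_lborel_singleton[of u]
    by (intro nn_integral_cong_AE, eventually_elim)
       (use assms in \<open>auto simp: laplace_dens_def indicator_def ennreal_half\<close>)
  also have "\<dots> = ennreal (exp (-u)) * ennreal (1/2)"
    by (subst nn_integral_multc) (auto simp: nn_integral_exp1_tail)
  finally show ?thesis using ennreal_half[of "exp (-u)"] by simp
qed

text \<open>The Laplace law is symmetric.\<close>
lemma laplace_lower_reflect:
  "(\<integral>\<^sup>+v. ennreal (laplace_dens v) * indicator {..u} v \<partial>lborel) =
   (\<integral>\<^sup>+v. ennreal (laplace_dens v) * indicator {-u<..} v \<partial>lborel)"
proof -
  have "(\<integral>\<^sup>+v. ennreal (laplace_dens v) * indicator {..u} v \<partial>lborel) =
        (\<integral>\<^sup>+v. ennreal (laplace_dens (0 + (-1) * v)) * indicator {..u} (0 + (-1) * v) \<partial>lborel)"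
    using nn_integral_real_affine[of "\<lambda>v. ennreal (laplace_dens v) * indicator {..u} v" "-1" 0]
    by simp
  also have "\<dots> = (\<integral>\<^sup>+v. ennreal (laplace_dens v) * indicator {-u<..} v \<partial>lborel)"
    using AE_lborel_singleton[of "-u"]
    by (intro nn_integral_cong_AE, eventually_elim) (auto simp: laplace_dens_def indicator_def)
  finally show ?thesis .
qed

lemma laplace_split:
  "(\<integral>\<^sup>+v. ennreal (laplace_dens v) * indicator {..u} v \<partial>lborel) +
   (\<integral>\<^sup>+v. ennreal (laplace_dens v) * indicator {u<..} v \<partial>lborel) =
   (\<integral>\<^sup>+v. ennreal (laplace_dens v) \<partial>lborel)"
proof -
  have "(\<integral>\<^sup>+v. ennreal (laplace_dens v) * indicator {..u} v \<partial>lborel) +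
        (\<integral>\<^sup>+v. ennreal (laplace_dens v) * indicator {u<..} v \<partial>lborel) =
        (\<integral>\<^sup>+v. ennreal (laplace_dens v) * indicator {..u} v
               + ennreal (laplace_dens v) * indicator {u<..} v \<partial>lborel)"
    by (subst nn_integral_add) auto
  also have "\<dots> = (\<integral>\<^sup>+v. ennreal (laplace_dens v) \<partial>lborel)"
    by (rule nn_integral_cong) (auto simp: indicator_def)
  finally show ?thesis .
qed

lemma laplace_total: "(\<integral>\<^sup>+v. ennreal (laplace_dens v) \<partial>lborel) = 1"
proof -
  have "(\<integral>\<^sup>+v. ennreal (laplace_dens v) \<partial>lborel) = ennreal (1/2) + ennreal (1/2)"
    using laplace_split[of 0] laplace_lower_reflect[of 0] laplace_upper_nonneg[of 0] by simp
  also have "\<dots> = 1" by (subst ennreal_plus[symmetric]) auto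
  finally show ?thesis .
qed

lemma ennreal_eq_one_minus:
  assumes "a + ennreal x = 1" "0 \<le> x"
  shows "a = ennreal (1 - x)"
proof -
  have "a = a + ennreal x - ennreal x" by simp
  also have "\<dots> = ennreal 1 - ennreal x" using assms by simp
  also have "\<dots> = ennreal (1 - x)" using assms ennreal_minus[of x 1] by simp
  finally show ?thesis .
qed

lemma laplace_upper:
  "(\<integral>\<^sup>+v. ennreal (laplace_dens v) * indicator {u<..} v \<partial>lborel) = ennreal (laplace_tail u)"
proof (cases "u \<ge> 0")
  case True
  then show ?thesis by (simp add: laplace_upper_nonneg laplace_tail_def)
next
  case False
  then have "(\<integral>\<^sup>+v. ennreal (laplace_dens v) * indicator {u<..} v \<partial>lborel) = ennreal (1 - exp u/2)"
    using laplace_split[of u] laplace_total laplace_lower_reflect[of u] laplace_upper_nonneg[of "-u"]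
    by (intro ennreal_eq_one_minus) (auto simp: add.commute)
  then show ?thesis using False by (simp add: laplace_tail_def)
qed

lemma laplace_lower:
  "(\<integral>\<^sup>+v. ennreal (laplace_dens v) * indicator {..u} v \<partial>lborel) = ennreal (laplace_cdf u)"
  unfolding laplace_lower_reflect laplace_upper laplace_cdf_def ..


section \<open>The transition kernel of one step of the chain\<close>

lemma ladder_step_clamp: "z \<ge> 0 \<Longrightarrow> ladder_step d x y z = max (-z) (min z (d + y - x))"
  by (auto simp: ladder_step_def min_def max_def)

text \<open>Averaging the clamp over an exponential Z: an atom at w of weight e^{-|w|}, plus the
  exponential density on the part of the half-line lying between 0 and w.\<close>
lemma clamp_integral:
  assumes [measurable]: "h \<in> borel_measurable borel"
  shows "(\<integral>\<^sup>+z. exp_dens z * h (max (-z) (min z w)) \<partial>lborel) =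
     ennreal (exp (-\<bar>w\<bar>)) * h w
     + (\<integral>\<^sup>+z. exp_dens z * h z * indicator {..<w} z \<partial>lborel)
     + (\<integral>\<^sup>+z. exp_dens (-z) * h z * indicator {w<..} z \<partial>lborel)"
proof -
  have pointwise: "exp_dens z * h (max (-z) (min z w)) =
     (ennreal (exp (-z)) * indicator {\<bar>w\<bar>..} z * h w + exp_dens z * h z * indicator {..<w} z)
     + exp_dens z * h (-z) * indicator {..< -w} z" for z
    by (cases "z \<ge> 0"; cases "z < w"; cases "z < -w")
       (auto simp: exp_dens_def indicator_def max_def min_def abs_if)
  have "(\<integral>\<^sup>+z. exp_dens z * h (max (-z) (min z w)) \<partial>lborel) =
      (\<integral>\<^sup>+z. ennreal (exp (-z)) * indicator {\<bar>w\<bar>..} z * h w \<partial>lborel)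
     + (\<integral>\<^sup>+z. exp_dens z * h z * indicator {..<w} z \<partial>lborel)
     + (\<integral>\<^sup>+z. exp_dens z * h (-z) * indicator {..< -w} z \<partial>lborel)"
    unfolding pointwise by (subst nn_integral_add; (subst nn_integral_add)?) auto
  also have "(\<integral>\<^sup>+z. ennreal (exp (-z)) * indicator {\<bar>w\<bar>..} z * h w \<partial>lborel) =
      ennreal (exp (-\<bar>w\<bar>)) * h w"
    by (subst nn_integral_multc) (auto simp: nn_integral_exp1_tail)
  also have "(\<integral>\<^sup>+z. exp_dens z * h (-z) * indicator {..< -w} z \<partial>lborel) =
      (\<integral>\<^sup>+z. exp_dens (-z) * h z * indicator {w<..} z \<partial>lborel)"
    using nn_integral_real_affine[of "\<lambda>z. exp_dens z * h (-z) * indicator {..< -w} z" "-1" 0]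
    by (simp add: indicator_def)
  finally show ?thesis .
qed

lemma nn_integral_below_measurable[measurable]:
  fixes g :: "real \<Rightarrow> ennreal"
  assumes [measurable]: "g \<in> borel_measurable borel"
  shows "(\<lambda>w. \<integral>\<^sup>+z. g z * indicator {..<w} z \<partial>lborel) \<in> borel_measurable borel"
proof -
  have "(\<lambda>(w,z). g z * indicator {..<w} z) = (\<lambda>(w::real,z::real). if z < w then g z else 0)"
    by (auto simp: indicator_def fun_eq_iff)
  also have "\<dots> \<in> borel_measurable (borel \<Otimes>\<^sub>M lborel)" by measurable
  finally show ?thesis by (rule lborel.borel_measurable_nn_integral)
qed

lemma nn_integral_above_measurable[measurable]:
  fixes g :: "real \<Rightarrow> ennreal"
  assumes [measurable]: "g \<in> borel_measurable borel"
  shows "(\<lambda>w. \<integral>\<^sup>+z. g z * indicator {w<..} z \<partial>lborel) \<in> borel_measurable borel"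
proof -
  have "(\<lambda>(w,z). g z * indicator {w<..} z) = (\<lambda>(w::real,z::real). if w < z then g z else 0)"
    by (auto simp: indicator_def fun_eq_iff)
  also have "\<dots> \<in> borel_measurable (borel \<Otimes>\<^sub>M lborel)" by measurable
  finally show ?thesis by (rule lborel.borel_measurable_nn_integral)
qed

text \<open>Tonelli's theorem for a Laplace-weighted region below/above w: the inner region
  turns into the Laplace tail/distribution function.\<close>
lemma laplace_mix_below:
  fixes g :: "real \<Rightarrow> ennreal"
  assumes [measurable]: "g \<in> borel_measurable borel"
  shows "(\<integral>\<^sup>+w. ennreal (laplace_dens (w - d)) * (\<integral>\<^sup>+z. g z * indicator {..<w} z \<partial>lborel) \<partial>lborel)
       = (\<integral>\<^sup>+z. g z * ennreal (laplace_tail (z - d)) \<partial>lborel)"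
proof -
  have "(\<lambda>(w,z). ennreal (laplace_dens (w - d)) * (g z * indicator {..<w} z)) =
        (\<lambda>(w::real,z::real). if z < w then ennreal (laplace_dens (w - d)) * g z else 0)"
    by (auto simp: indicator_def fun_eq_iff)
  also have "\<dots> \<in> borel_measurable (lborel \<Otimes>\<^sub>M lborel)" by measurable
  finally have prod_meas: "(\<lambda>(w,z). ennreal (laplace_dens (w - d)) * (g z * indicator {..<w} z))
      \<in> borel_measurable (lborel \<Otimes>\<^sub>M lborel)" .
  have shifted: "(\<integral>\<^sup>+w. ennreal (laplace_dens (w - d)) * indicator {z<..} w \<partial>lborel)
      = ennreal (laplace_tail (z - d))" for z
    using nn_integral_real_affine[of "\<lambda>v. ennreal (laplace_dens v) * indicator {z - d<..} v" 1 "-d"]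
    by (simp add: indicator_def laplace_upper[symmetric])
  have "(\<integral>\<^sup>+w. ennreal (laplace_dens (w - d)) * (\<integral>\<^sup>+z. g z * indicator {..<w} z \<partial>lborel) \<partial>lborel)
      = (\<integral>\<^sup>+w. (\<integral>\<^sup>+z. ennreal (laplace_dens (w - d)) * (g z * indicator {..<w} z) \<partial>lborel) \<partial>lborel)"
    by (rule nn_integral_cong) (rule nn_integral_cmult[symmetric], measurable)
  also have "\<dots> = (\<integral>\<^sup>+z. (\<integral>\<^sup>+w. ennreal (laplace_dens (w - d)) * (g z * indicator {..<w} z) \<partial>lborel) \<partial>lborel)"
    using prod_meas by (rule lborel_pair.Fubini'[symmetric])
  also have "\<dots> = (\<integral>\<^sup>+z. (\<integral>\<^sup>+w. ennreal (laplace_dens (w - d)) * indicator {z<..} w \<partial>lborel) * g z \<partial>lborel)"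
    by (rule nn_integral_cong, subst nn_integral_multc[symmetric])
       (auto intro!: nn_integral_cong simp: indicator_def)
  also have "\<dots> = (\<integral>\<^sup>+z. g z * ennreal (laplace_tail (z - d)) \<partial>lborel)"
    by (rule nn_integral_cong) (subst shifted, rule mult.commute)
  finally show ?thesis .
qed

lemma laplace_mix_above:
  fixes g :: "real \<Rightarrow> ennreal"
  assumes [measurable]: "g \<in> borel_measurable borel"
  shows "(\<integral>\<^sup>+w. ennreal (laplace_dens (w - d)) * (\<integral>\<^sup>+z. g z * indicator {w<..} z \<partial>lborel) \<partial>lborel)
       = (\<integral>\<^sup>+z. g z * ennreal (laplace_cdf (z - d)) \<partial>lborel)"
proof -
  have "(\<lambda>(w,z). ennreal (laplace_dens (w - d)) * (g z * indicator {w<..} z)) =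
        (\<lambda>(w::real,z::real). if w < z then ennreal (laplace_dens (w - d)) * g z else 0)"
    by (auto simp: indicator_def fun_eq_iff)
  also have "\<dots> \<in> borel_measurable (lborel \<Otimes>\<^sub>M lborel)" by measurable
  finally have prod_meas: "(\<lambda>(w,z). ennreal (laplace_dens (w - d)) * (g z * indicator {w<..} z))
      \<in> borel_measurable (lborel \<Otimes>\<^sub>M lborel)" .
  have shifted: "(\<integral>\<^sup>+w. ennreal (laplace_dens (w - d)) * indicator {..<z} w \<partial>lborel)
      = ennreal (laplace_cdf (z - d))" for z
  proof -
    have "(\<integral>\<^sup>+w. ennreal (laplace_dens (w - d)) * indicator {..<z} w \<partial>lborel)
        = (\<integral>\<^sup>+v. ennreal (laplace_dens v) * indicator {..<z - d} v \<partial>lborel)"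
      using nn_integral_real_affine[of "\<lambda>v. ennreal (laplace_dens v) * indicator {..<z - d} v" 1 "-d"]
      by (simp add: indicator_def)
    also have "\<dots> = (\<integral>\<^sup>+v. ennreal (laplace_dens v) * indicator {..z - d} v \<partial>lborel)"
      using AE_lborel_singleton[of "z - d"]
      by (intro nn_integral_cong_AE, eventually_elim) (auto simp: indicator_def)
    finally show ?thesis by (simp add: laplace_lower)
  qed
  have "(\<integral>\<^sup>+w. ennreal (laplace_dens (w - d)) * (\<integral>\<^sup>+z. g z * indicator {w<..} z \<partial>lborel) \<partial>lborel)
      = (\<integral>\<^sup>+w. (\<integral>\<^sup>+z. ennreal (laplace_dens (w - d)) * (g z * indicator {w<..} z) \<partial>lborel) \<partial>lborel)"
    by (rule nn_integral_cong) (rule nn_integral_cmult[symmetric], measurable)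
  also have "\<dots> = (\<integral>\<^sup>+z. (\<integral>\<^sup>+w. ennreal (laplace_dens (w - d)) * (g z * indicator {w<..} z) \<partial>lborel) \<partial>lborel)"
    using prod_meas by (rule lborel_pair.Fubini'[symmetric])
  also have "\<dots> = (\<integral>\<^sup>+z. (\<integral>\<^sup>+w. ennreal (laplace_dens (w - d)) * indicator {..<z} w \<partial>lborel) * g z \<partial>lborel)"
    by (rule nn_integral_cong, subst nn_integral_multc[symmetric])
       (auto intro!: nn_integral_cong simp: indicator_def)
  also have "\<dots> = (\<integral>\<^sup>+z. g z * ennreal (laplace_cdf (z - d)) \<partial>lborel)"
    by (rule nn_integral_cong) (subst shifted, rule mult.commute)
  finally show ?thesis .
qed

text \<open>The Lebesgue density k(d, t) of the next state when the current state is d.\<close>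
definition step_kernel :: "real \<Rightarrow> real \<Rightarrow> real" where
  "step_kernel d t =
     (if 0 \<le> t then exp (-t) * (if d \<le> t then exp (d - t) else 1)
      else exp t * (if t < d then exp (t - d) else 1))"

lemma step_kernel_nonneg: "0 \<le> step_kernel d t"
  by (auto simp: step_kernel_def)

lemma step_kernel_le_1: "step_kernel d t \<le> 1"
  by (auto simp: step_kernel_def intro!: mult_le_one)

lemma step_kernel_measurable[measurable]: "case_prod step_kernel \<in> borel_measurable (borel \<Otimes>\<^sub>M borel)"
  unfolding step_kernel_def by measurable

text \<open>The three contributions (atom of the clamp, mass pushed to the upper and to the lower
  bound) add up to the closed-form kernel away from 0.\<close>
lemma step_kernel_decomposition:
  assumes "t \<noteq> 0"
  shows "ennreal (laplace_dens (t - d)) * ennreal (exp (-\<bar>t\<bar>))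
      + exp_dens t * ennreal (laplace_tail (t - d))
      + exp_dens (-t) * ennreal (laplace_cdf (t - d)) = ennreal (step_kernel d t)"
proof -
  have "ennreal (laplace_dens (t - d)) * ennreal (exp (-\<bar>t\<bar>))
      + exp_dens t * ennreal (laplace_tail (t - d)) + exp_dens (-t) * ennreal (laplace_cdf (t - d)) =
      ennreal (laplace_dens (t - d) * exp (-\<bar>t\<bar>) + (if t \<ge> 0 then exp (-t) else 0) * laplace_tail (t - d)
        + (if t \<le> 0 then exp t else 0) * laplace_cdf (t - d))"
    unfolding exp_dens_def laplace_cdf_def
    using assms laplace_tail_nonneg[of "t - d"] laplace_tail_nonneg[of "d - t"]
    by (simp add: ennreal_plus[symmetric] ennreal_mult[symmetric] laplace_dens_def indicator_def
             del: ennreal_plus)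
  also have "\<dots> = ennreal (step_kernel d t)"
  proof (cases "t > 0")
    case True
    then show ?thesis
      by (cases "d \<le> t") (auto simp: step_kernel_def laplace_dens_def laplace_tail_def
                                      exp_diff exp_minus field_simps)
  next
    case False
    with assms have "t < 0" by simp
    then show ?thesis
      by (cases "t < d") (auto simp: step_kernel_def laplace_dens_def laplace_cdf_def laplace_tail_def
                                     exp_diff exp_minus field_simps)
  qed
  finally show ?thesis .
qed

lemma step_kernel_integral:
  assumes [measurable]: "h \<in> borel_measurable borel"
  shows "(\<integral>\<^sup>+x. exp_dens x * (\<integral>\<^sup>+y. exp_dens y *
            (\<integral>\<^sup>+z. exp_dens z * h (ladder_step d x y z) \<partial>lborel) \<partial>lborel) \<partial>lborel)
       = (\<integral>\<^sup>+t. ennreal (step_kernel d t) * h t \<partial>lborel)"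
proof -
  define H where "H w = ennreal (exp (-\<bar>w\<bar>)) * h w
     + (\<integral>\<^sup>+z. exp_dens z * h z * indicator {..<w} z \<partial>lborel)
     + (\<integral>\<^sup>+z. exp_dens (-z) * h z * indicator {w<..} z \<partial>lborel)" for w
  have [measurable]: "H \<in> borel_measurable borel"
    unfolding H_def by measurable
  have z_step: "(\<integral>\<^sup>+z. exp_dens z * h (ladder_step d x y z) \<partial>lborel) = H (d + y - x)" for x y
  proof -
    have "(\<integral>\<^sup>+z. exp_dens z * h (ladder_step d x y z) \<partial>lborel) =
          (\<integral>\<^sup>+z. exp_dens z * h (max (-z) (min z (d + y - x))) \<partial>lborel)"
      by (rule nn_integral_cong) (auto simp: exp_dens_def ladder_step_clamp indicator_def)
    then show ?thesis unfolding H_def using clamp_integral[OF assms] by simp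
  qed
  have "(\<integral>\<^sup>+x. exp_dens x * (\<integral>\<^sup>+y. exp_dens y *
            (\<integral>\<^sup>+z. exp_dens z * h (ladder_step d x y z) \<partial>lborel) \<partial>lborel) \<partial>lborel)
      = (\<integral>\<^sup>+w. ennreal (laplace_dens (w - d)) * H w \<partial>lborel)"
    unfolding z_step by (rule exp_difference_integral) simp
  also have "\<dots> = (\<integral>\<^sup>+t. ennreal (laplace_dens (t - d)) * (ennreal (exp (-\<bar>t\<bar>)) * h t) \<partial>lborel)
     + (\<integral>\<^sup>+w. ennreal (laplace_dens (w - d)) *
          (\<integral>\<^sup>+z. exp_dens z * h z * indicator {..<w} z \<partial>lborel) \<partial>lborel)
     + (\<integral>\<^sup>+w. ennreal (laplace_dens (w - d)) *
          (\<integral>\<^sup>+z. exp_dens (-z) * h z * indicator {w<..} z \<partial>lborel) \<partial>lborel)"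
    unfolding H_def distrib_left by (subst nn_integral_add; (subst nn_integral_add)?) auto
  also have "\<dots> = (\<integral>\<^sup>+t. ennreal (laplace_dens (t - d)) * (ennreal (exp (-\<bar>t\<bar>)) * h t) \<partial>lborel)
     + (\<integral>\<^sup>+t. exp_dens t * h t * ennreal (laplace_tail (t - d)) \<partial>lborel)
     + (\<integral>\<^sup>+t. exp_dens (-t) * h t * ennreal (laplace_cdf (t - d)) \<partial>lborel)"
    by (simp add: laplace_mix_below laplace_mix_above)
  also have "\<dots> = (\<integral>\<^sup>+t. (ennreal (laplace_dens (t - d)) * ennreal (exp (-\<bar>t\<bar>))
      + exp_dens t * ennreal (laplace_tail (t - d))
      + exp_dens (-t) * ennreal (laplace_cdf (t - d))) * h t \<partial>lborel)"
    unfolding distrib_right by (subst nn_integral_add; (subst nn_integral_add)?) (auto simp: mult_ac)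
  also have "\<dots> = (\<integral>\<^sup>+t. ennreal (step_kernel d t) * h t \<partial>lborel)"
    using AE_lborel_singleton[of 0]
    by (intro nn_integral_cong_AE, eventually_elim) (simp add: step_kernel_decomposition)
  finally show ?thesis .
qed


section \<open>The law of the next state\<close>

lemma prob_space_Exp1: "prob_space Exp1"
  unfolding Exp1_def by (rule prob_space_exponential_density) (rule zero_less_one)

lemma sets_Exp1[simp, measurable_cong]: "sets Exp1 = sets borel"
  unfolding Exp1_def by (simp only: sets_density sets_lborel)

lemma nn_integral_Exp1:
  assumes [measurable]: "f \<in> borel_measurable borel"
  shows "(\<integral>\<^sup>+x. f x \<partial>Exp1) = (\<integral>\<^sup>+x. exp_dens x * f x \<partial>lborel)"
  unfolding Exp1_def
  by (subst nn_integral_density)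
     (auto intro!: nn_integral_cong simp: exp_dens_def exponential_density_def indicator_def)

abbreviation Exp1_cube :: "(real \<times> real \<times> real) measure" where
  "Exp1_cube \<equiv> Exp1 \<Otimes>\<^sub>M (Exp1 \<Otimes>\<^sub>M Exp1)"

lemma sigma_finite_Exp1_cube: "sigma_finite_measure Exp1_cube"
  by (intro prob_space_imp_sigma_finite prob_space_pair prob_space_Exp1)

lemma nn_integral_Exp1_cube:
  assumes [measurable]: "F \<in> borel_measurable (borel \<Otimes>\<^sub>M (borel \<Otimes>\<^sub>M borel))"
  shows "(\<integral>\<^sup>+q. F q \<partial>Exp1_cube) =
     (\<integral>\<^sup>+x. exp_dens x * (\<integral>\<^sup>+y. exp_dens y * (\<integral>\<^sup>+z. exp_dens z * F (x,y,z) \<partial>lborel) \<partial>lborel) \<partial>lborel)"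
proof -
  have sf1: "sigma_finite_measure Exp1" and sf2: "sigma_finite_measure (Exp1 \<Otimes>\<^sub>M Exp1)"
    by (intro prob_space_imp_sigma_finite prob_space_pair prob_space_Exp1)+
  have "(\<integral>\<^sup>+q. F q \<partial>Exp1_cube) = (\<integral>\<^sup>+x. (\<integral>\<^sup>+q. F (x,q) \<partial>(Exp1 \<Otimes>\<^sub>M Exp1)) \<partial>Exp1)"
    by (rule sigma_finite_measure.nn_integral_fst[OF sf2, symmetric]) measurable
  also have "\<dots> = (\<integral>\<^sup>+x. (\<integral>\<^sup>+y. (\<integral>\<^sup>+z. F (x,y,z) \<partial>Exp1) \<partial>Exp1) \<partial>Exp1)"
    by (rule nn_integral_cong, rule sigma_finite_measure.nn_integral_fst[OF sf1, symmetric]) measurable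
  also have "\<dots> = (\<integral>\<^sup>+x. exp_dens x * (\<integral>\<^sup>+y. exp_dens y * (\<integral>\<^sup>+z. exp_dens z * F (x,y,z) \<partial>lborel) \<partial>lborel) \<partial>lborel)"
    by (simp add: nn_integral_Exp1)
  finally show ?thesis .
qed

lemma ladder_step_measurable[measurable]:
  "(\<lambda>(x, y, z). ladder_step d x y z) \<in> borel_measurable (borel \<Otimes>\<^sub>M (borel \<Otimes>\<^sub>M borel))"
  unfolding ladder_step_def by measurable

lemma step_transition:
  assumes [measurable]: "A \<in> sets borel"
  shows "(\<integral>\<^sup>+q. indicator A (case q of (x, y, z) \<Rightarrow> ladder_step d x y z) \<partial>Exp1_cube) =
         (\<integral>\<^sup>+t. ennreal (step_kernel d t) * indicator A t \<partial>lborel)"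
  by (subst nn_integral_Exp1_cube) (simp_all add: step_kernel_integral)

lemma next_state_law:
  fixes \<rho> :: "real \<Rightarrow> real"
  assumes [measurable]: "\<rho> \<in> borel_measurable borel"
  shows "distr (density lborel (\<lambda>x. ennreal (\<rho> x)) \<Otimes>\<^sub>M Exp1_cube) borel
       (\<lambda>(d, x, y, z). ladder_step d x y z) =
     density lborel (\<lambda>t. \<integral>\<^sup>+d. ennreal (\<rho> d) * ennreal (step_kernel d t) \<partial>lborel)"
    (is "distr ?N borel ?g = density lborel ?D")
proof (rule measure_eqI)
  have "sets ?N = sets (borel \<Otimes>\<^sub>M (borel \<Otimes>\<^sub>M (borel \<Otimes>\<^sub>M borel)))"
    by (intro sets_pair_measure_cong) auto
  then have [measurable]: "?g \<in> borel_measurable ?N"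
    unfolding measurable_cong_sets[OF _ refl] ladder_step_def by measurable
  show "sets (distr ?N borel ?g) = sets (density lborel ?D)" by simp
  fix A assume "A \<in> sets (distr ?N borel ?g)"
  then have [measurable]: "A \<in> sets borel" by simp
  have "emeasure (distr ?N borel ?g) A = (\<integral>\<^sup>+t. indicator A t \<partial>distr ?N borel ?g)"
    by (rule nn_integral_indicator[symmetric]) simp
  also have "\<dots> = (\<integral>\<^sup>+p. indicator A (?g p) \<partial>?N)"
    by (rule nn_integral_distr) auto
  also have "\<dots> = (\<integral>\<^sup>+d. (\<integral>\<^sup>+q. indicator A (?g (d, q)) \<partial>Exp1_cube) \<partial>density lborel (\<lambda>x. ennreal (\<rho> x)))"
    by (rule sigma_finite_measure.nn_integral_fst[OF sigma_finite_Exp1_cube, symmetric]) simp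
  also have "\<dots> = (\<integral>\<^sup>+d. (\<integral>\<^sup>+t. ennreal (step_kernel d t) * indicator A t \<partial>lborel) \<partial>density lborel (\<lambda>x. ennreal (\<rho> x)))"
    by (simp add: step_transition)
  also have "\<dots> = (\<integral>\<^sup>+d. ennreal (\<rho> d) * (\<integral>\<^sup>+t. ennreal (step_kernel d t) * indicator A t \<partial>lborel) \<partial>lborel)"
    by (intro nn_integral_density) measurable
  also have "\<dots> = (\<integral>\<^sup>+d. (\<integral>\<^sup>+t. ennreal (\<rho> d) * ennreal (step_kernel d t) * indicator A t \<partial>lborel) \<partial>lborel)"
    by (rule nn_integral_cong) (subst nn_integral_cmult[symmetric], auto simp: mult.assoc)
  also have "\<dots> = (\<integral>\<^sup>+t. (\<integral>\<^sup>+d. ennreal (\<rho> d) * ennreal (step_kernel d t) * indicator A t \<partial>lborel) \<partial>lborel)"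
    by (rule lborel_pair.Fubini'[symmetric]) measurable
  also have "\<dots> = (\<integral>\<^sup>+t. ?D t * indicator A t \<partial>lborel)"
    by (rule nn_integral_cong) (subst nn_integral_multc[symmetric], auto)
  also have "\<dots> = emeasure (density lborel ?D) A"
    by (rule emeasure_density[symmetric]) measurable
  finally show "emeasure (distr ?N borel ?g) A = emeasure (density lborel ?D) A" .
qed


section \<open>Differentiating the stationarity equation\<close>

definition window_integral :: "(real \<Rightarrow> real) \<Rightarrow> real \<Rightarrow> real \<Rightarrow> real" where
  "window_integral f a u = (\<integral> s. f s * indicator {a<..u} s \<partial>lborel)"

lemma window_integral_ae:
  fixes f g :: "real \<Rightarrow> real"
  assumes [measurable]: "f \<in> borel_measurable borel"
    and f_int: "set_integrable lborel {a..b} f"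
    and ae: "AE s in lborel. f s = g s"
  shows window_integral_continuous: "continuous_on {a..b} (window_integral f a)"
    and window_integral_deriv: "t \<in> {a..b} \<Longrightarrow> continuous (at t within {a..b}) g \<Longrightarrow>
      (window_integral f a has_real_derivative g t) (at t within {a..b})"
proof -
  from ae obtain N where N: "{x \<in> space lborel. \<not> f x = g x} \<subseteq> N"
      "emeasure lborel N = 0" "N \<in> sets lborel"
    by (rule AE_E)
  have fg: "\<And>x. x \<notin> N \<Longrightarrow> f x = g x"
    using N(1) by (auto simp: subset_iff)
  have negN: "negligible N"
    unfolding negligible_iff_null_sets
    by (rule null_sets_completionI) (use N in \<open>auto intro: null_setsI\<close>)
  have eq: "window_integral f a u = integral {a..u} g" if u: "u \<in> {a..b}" for u
  proof -
    have si: "set_integrable lborel {a..u} f"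
      by (rule set_integrable_subset[OF f_int]) (use u in auto)
    have "window_integral f a u = (\<integral> s. indicator {a..u} s *\<^sub>R f s \<partial>lborel)"
      unfolding window_integral_def using AE_lborel_singleton[of a]
      by (intro integral_cong_AE, measurable, eventually_elim) (auto simp: indicator_def)
    also have "\<dots> = integral {a..u} f"
      using set_borel_integral_eq_integral(2)[OF si] by (simp add: set_lebesgue_integral_def)
    also have "\<dots> = integral {a..u} g"
      by (rule integral_spike[OF negN]) (use fg in force)
    finally show ?thesis .
  qed
  have g_int: "g integrable_on {a..b}"
    by (rule integrable_spike[OF set_borel_integral_eq_integral(1)[OF f_int] negN]) (use fg in force)
  show "continuous_on {a..b} (window_integral f a)"
    using indefinite_integral_continuous_1[OF g_int] by (rule continuous_on_eq) (simp add: eq)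
  assume t: "t \<in> {a..b}" and g_cont: "continuous (at t within {a..b}) g"
  have "((\<lambda>u. integral {a..u} g) has_vector_derivative g t) (at t within {a..b} - {})"
    by (rule integral_has_vector_derivative_continuous_at) (use g_int t g_cont in auto)
  then have "((\<lambda>u. integral {a..u} g) has_real_derivative g t) (at t within {a..b})"
    by (simp add: has_real_derivative_iff_has_vector_derivative)
  then show "(window_integral f a has_real_derivative g t) (at t within {a..b})"
    by (rule has_field_derivative_transform_within[where d=1]) (use t eq in auto)
qed

lemma integrable_mult_bounded:
  fixes \<rho> h :: "real \<Rightarrow> real"
  assumes "integrable lborel \<rho>" "h \<in> borel_measurable borel" "\<And>s. \<bar>h s\<bar> \<le> C"
  shows "integrable lborel (\<lambda>s. \<rho> s * h s)"
proof (rule Bochner_Integration.integrable_bound[where f="\<lambda>s. C * \<rho> s"])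
  show "integrable lborel (\<lambda>s. C * \<rho> s)" using assms(1) by simp
  show "(\<lambda>s. \<rho> s * h s) \<in> borel_measurable lborel"
    using assms(1,2) by (auto simp: borel_measurable_integrable)
  show "AE x in lborel. norm (\<rho> x * h x) \<le> norm (C * \<rho> x)"
  proof
    fix x
    have "\<bar>h x\<bar> \<le> \<bar>C\<bar>" using assms(3)[of x] by linarith
    then show "norm (\<rho> x * h x) \<le> norm (C * \<rho> x)"
      by (simp add: abs_mult) (metis abs_ge_zero mult.commute mult_left_mono)
  qed
qed

lemma integral_add_pointwise:
  fixes f g h :: "real \<Rightarrow> real"
  assumes "integrable lborel f" "integrable lborel g" "\<And>x. h x = f x + g x"
  shows "integral\<^sup>L lborel h = integral\<^sup>L lborel f + integral\<^sup>L lborel g"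
proof -
  have "h = (\<lambda>x. f x + g x)" using assms(3) by auto
  then show ?thesis using assms(1,2) by simp
qed

locale prob_density =
  fixes \<rho> :: "real \<Rightarrow> real"
  assumes measurable_rho[measurable]: "\<rho> \<in> borel_measurable borel"
    and nonneg: "\<And>x. 0 \<le> \<rho> x"
    and integrable_rho: "integrable lborel \<rho>"
begin

definition rho0 :: "real \<Rightarrow> real" where
  "rho0 t = (\<integral> d. \<rho> d * step_kernel d t \<partial>lborel)"

definition mass_le :: "real \<Rightarrow> real" where
  "mass_le t = (\<integral> s. \<rho> s * indicator {..t} s \<partial>lborel)"

definition mass_gt :: "real \<Rightarrow> real" where
  "mass_gt t = (\<integral> s. \<rho> s * indicator {t<..} s \<partial>lborel)"

definition exp_moment_le :: "real \<Rightarrow> real" where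
  "exp_moment_le t = (\<integral> s. \<rho> s * (exp s * indicator {..t} s) \<partial>lborel)"

definition exp_moment_gt :: "real \<Rightarrow> real" where
  "exp_moment_gt t = (\<integral> s. \<rho> s * (exp (-s) * indicator {t<..} s) \<partial>lborel)"

lemma integrable_indicator: "A \<in> sets borel \<Longrightarrow> integrable lborel (\<lambda>s. \<rho> s * indicator A s)"
  by (rule integrable_mult_bounded[OF integrable_rho, where C=1]) (auto simp: indicator_def)

lemma integrable_exp_le: "integrable lborel (\<lambda>s. \<rho> s * (exp s * indicator {..t} s))"
  by (rule integrable_mult_bounded[OF integrable_rho, where C="exp t"]) (auto simp: indicator_def)

lemma integrable_exp_gt: "integrable lborel (\<lambda>s. \<rho> s * (exp (-s) * indicator {t<..} s))"
  by (rule integrable_mult_bounded[OF integrable_rho, where C="exp (-t)"]) (auto simp: indicator_def)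

lemma set_integrable_exp: "set_integrable lborel {a..b} (\<lambda>s. \<rho> s * exp s)"
  unfolding set_integrable_def
  using integrable_mult_bounded[OF integrable_rho, where C="exp b" and h="\<lambda>s. exp s * indicator {a..b} s"]
  by (auto simp: indicator_def mult_ac)

lemma set_integrable_exp_minus: "set_integrable lborel {a..b} (\<lambda>s. \<rho> s * exp (-s))"
  unfolding set_integrable_def
  using integrable_mult_bounded[OF integrable_rho, where C="exp (-a)" and h="\<lambda>s. exp (-s) * indicator {a..b} s"]
  by (auto simp: indicator_def mult_ac)

lemma set_integrable_rho: "set_integrable lborel {a..b} \<rho>"
  unfolding set_integrable_def using integrable_indicator[of "{a..b}"] by (simp add: mult.commute)

lemma rho0_nonneg_arg: "0 \<le> t \<Longrightarrow> rho0 t = exp (-t) * (exp (-t) * exp_moment_le t + mass_gt t)"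
proof -
  assume t: "0 \<le> t"
  have "rho0 t = (\<integral> d. exp (-t) * exp (-t) * (\<rho> d * (exp d * indicator {..t} d))
                       + exp (-t) * (\<rho> d * indicator {t<..} d) \<partial>lborel)"
    unfolding rho0_def
    by (rule Bochner_Integration.integral_cong)
       (auto simp: step_kernel_def t exp_diff exp_minus field_simps indicator_def)
  also have "\<dots> = exp (-t) * exp (-t) * exp_moment_le t + exp (-t) * mass_gt t"
    unfolding exp_moment_le_def mass_gt_def
    by (subst integral_add_pointwise[OF _ _ refl]) (auto intro: integrable_exp_le integrable_indicator)
  finally show ?thesis by (simp add: algebra_simps)
qed

lemma rho0_neg_arg: "t < 0 \<Longrightarrow> rho0 t = exp t * (exp t * exp_moment_gt t + mass_le t)"
proof -
  assume t: "t < 0"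
  have "rho0 t = (\<integral> d. exp t * exp t * (\<rho> d * (exp (-d) * indicator {t<..} d))
                       + exp t * (\<rho> d * indicator {..t} d) \<partial>lborel)"
    unfolding rho0_def
    by (rule Bochner_Integration.integral_cong)
       (use t in \<open>auto simp: step_kernel_def exp_diff exp_minus field_simps indicator_def\<close>)
  also have "\<dots> = exp t * exp t * exp_moment_gt t + exp t * mass_le t"
    unfolding exp_moment_gt_def mass_le_def
    by (subst integral_add_pointwise[OF _ _ refl]) (auto intro: integrable_exp_gt integrable_indicator)
  finally show ?thesis by (simp add: algebra_simps)
qed

lemma mass_le_window: "a \<le> u \<Longrightarrow> mass_le u = mass_le a + window_integral \<rho> a u"
  unfolding mass_le_def window_integral_def
  by (rule integral_add_pointwise[OF integrable_indicator integrable_indicator])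
     (auto simp: indicator_def)

lemma mass_gt_window: "a \<le> u \<Longrightarrow> mass_gt u = mass_gt a - window_integral \<rho> a u"
proof -
  assume "a \<le> u"
  then have "mass_gt a = mass_gt u + window_integral \<rho> a u"
    unfolding mass_gt_def window_integral_def
    by (intro integral_add_pointwise[OF integrable_indicator integrable_indicator])
       (auto simp: indicator_def)
  then show ?thesis by simp
qed

lemma exp_moment_le_window:
  "a \<le> u \<Longrightarrow> exp_moment_le u = exp_moment_le a + window_integral (\<lambda>s. \<rho> s * exp s) a u"
  unfolding exp_moment_le_def window_integral_def
  using integrable_mult_bounded[OF integrable_rho, where C="exp u" and h="\<lambda>s. exp s * indicator {a<..u} s"]
  by (intro integral_add_pointwise[OF integrable_exp_le])
     (auto simp: indicator_def mult.assoc)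

lemma exp_moment_gt_window:
  "a \<le> u \<Longrightarrow> exp_moment_gt u = exp_moment_gt a - window_integral (\<lambda>s. \<rho> s * exp (-s)) a u"
proof -
  assume "a \<le> u"
  then have "exp_moment_gt a = exp_moment_gt u + window_integral (\<lambda>s. \<rho> s * exp (-s)) a u"
    unfolding exp_moment_gt_def window_integral_def
    using integrable_mult_bounded[OF integrable_rho, where C="exp (-a)" and h="\<lambda>s. exp (-s) * indicator {a<..u} s"]
    by (intro integral_add_pointwise[OF integrable_exp_gt])
       (auto simp: indicator_def mult.assoc)
  then show ?thesis by simp
qed

lemma stationary_fixed_point:
  assumes "ladder_stationary (density lborel (\<lambda>x. ennreal (\<rho> x)))"
  shows "AE s in lborel. \<rho> s = rho0 s"
proof -
  have next_eq: "(\<integral>\<^sup>+d. ennreal (\<rho> d) * ennreal (step_kernel d t) \<partial>lborel) = ennreal (rho0 t)" for t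
  proof -
    have "integrable lborel (\<lambda>d. \<rho> d * step_kernel d t)"
      by (rule integrable_mult_bounded[OF integrable_rho, where C=1])
         (use step_kernel_nonneg step_kernel_le_1 in \<open>auto simp: abs_le_iff\<close>)
    then show ?thesis
      unfolding rho0_def using nonneg step_kernel_nonneg
      by (subst nn_integral_eq_integral[symmetric]) (auto simp: ennreal_mult)
  qed
  have "density lborel (\<lambda>x. ennreal (\<rho> x)) = density lborel (\<lambda>t. ennreal (rho0 t))"
    using assms next_state_law[OF measurable_rho] unfolding ladder_stationary_def next_eq by simp
  moreover have "rho0 \<in> borel_measurable borel"
    using lborel.borel_measurable_lebesgue_integral[of "\<lambda>t d. \<rho> d * step_kernel d t" borel]
    unfolding rho0_def by measurable
  ultimately have "AE x in lborel. ennreal (\<rho> x) = ennreal (rho0 x)"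
    by (intro sigma_finite_measure.density_unique[OF lborel.sigma_finite_measure_axioms]) auto
  moreover have rho0_nonneg: "0 \<le> rho0 t" for t
    unfolding rho0_def by (rule integral_nonneg_AE) (use nonneg step_kernel_nonneg in simp)
  ultimately show ?thesis
    by (elim AE_mp) (use nonneg rho0_nonneg in simp)
qed

end

text \<open>The functions rho1 and rho2 are the first and second derivatives of
  rho0, obtained by differentiating the representations of rho0 on each half-line, with
  rho0 substituted for rho at the cut point.\<close>
locale stationary_density = prob_density +
  assumes fixed_point: "AE s in lborel. \<rho> s = rho0 s"
begin

definition rho1 :: "real \<Rightarrow> real" where
  "rho1 u = (if 0 \<le> u then - exp (-u) * (2 * exp (-u) * exp_moment_le u + mass_gt u)
             else exp u * (2 * exp u * exp_moment_gt u + mass_le u))"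

definition rho2 :: "real \<Rightarrow> real" where
  "rho2 u = (if 0 \<le> u then exp (-u) * (4 * exp (-u) * exp_moment_le u + mass_gt u - rho0 u)
             else exp u * (4 * exp u * exp_moment_gt u + mass_le u - rho0 u))"

lemma fixed_point_exp: "AE s in lborel. \<rho> s * exp s = rho0 s * exp s"
  using fixed_point by eventually_elim simp

lemma fixed_point_exp_minus: "AE s in lborel. \<rho> s * exp (-s) = rho0 s * exp (-s)"
  using fixed_point by eventually_elim simp

text \<open>The three window integrals entering rho0 are continuous, and differentiable wherever
  rho0 is continuous: there the integrand may be replaced by rho0.\<close>
lemma windows_continuous:
  shows "continuous_on {a..b} (window_integral \<rho> a)"
    and "continuous_on {a..b} (window_integral (\<lambda>s. \<rho> s * exp s) a)"
    and "continuous_on {a..b} (window_integral (\<lambda>s. \<rho> s * exp (-s)) a)"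
  by (rule window_integral_continuous[OF _ set_integrable_rho fixed_point]
           window_integral_continuous[OF _ set_integrable_exp fixed_point_exp]
           window_integral_continuous[OF _ set_integrable_exp_minus fixed_point_exp_minus], simp)+

lemma windows_deriv:
  assumes "t \<in> {a..b}" and "continuous (at t within {a..b}) rho0"
  shows "(window_integral \<rho> a has_real_derivative rho0 t) (at t within {a..b})"
    and "(window_integral (\<lambda>s. \<rho> s * exp s) a has_real_derivative rho0 t * exp t)
           (at t within {a..b})"
    and "(window_integral (\<lambda>s. \<rho> s * exp (-s)) a has_real_derivative rho0 t * exp (-t))
           (at t within {a..b})"
  using assms
  by (intro window_integral_deriv[OF _ set_integrable_rho fixed_point]
            window_integral_deriv[OF _ set_integrable_exp fixed_point_exp]
            window_integral_deriv[OF _ set_integrable_exp_minus fixed_point_exp_minus]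
            continuous_intros; simp)+

lemma derivs_nonneg_arg:
  assumes t: "0 \<le> t"
  shows "(rho0 has_real_derivative rho1 t) (at t within {0..})"
    and "(rho1 has_real_derivative rho2 t) (at t within {0..})"
proof -
  let ?W = "{0..t+1}"
  let ?A = "window_integral \<rho> 0" and ?B = "window_integral (\<lambda>s. \<rho> s * exp s) 0"
  have tW: "t \<in> ?W" using t by simp
  have rho0_W: "rho0 u = exp (-u) * (exp (-u) * (exp_moment_le 0 + ?B u) + (mass_gt 0 - ?A u))"
    if "u \<in> ?W" for u
    using that rho0_nonneg_arg[of u] exp_moment_le_window[of 0 u] mass_gt_window[of 0 u]
    by simp
  have rho1_W: "rho1 u = - exp (-u) * (2 * exp (-u) * (exp_moment_le 0 + ?B u) + (mass_gt 0 - ?A u))"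
    if "u \<in> ?W" for u
    using that exp_moment_le_window[of 0 u] mass_gt_window[of 0 u] by (simp add: rho1_def)
  have "continuous_on ?W (\<lambda>u. exp (-u) * (exp (-u) * (exp_moment_le 0 + ?B u) + (mass_gt 0 - ?A u)))"
    by (intro continuous_intros windows_continuous)
  then have "continuous_on ?W rho0"
    by (rule continuous_on_eq) (simp add: rho0_W)
  then have rho0_cont: "continuous (at t within ?W) rho0"
    using tW continuous_on_eq_continuous_within by blast
  note dA = windows_deriv(1)[OF tW rho0_cont]
  note dB = windows_deriv(2)[OF tW rho0_cont]
  have "((\<lambda>u. exp (-u) * (exp (-u) * (exp_moment_le 0 + ?B u) + (mass_gt 0 - ?A u)))
          has_real_derivative rho1 t) (at t within ?W)"
    apply (rule derivative_eq_intros dA dB refl | simp)+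
    using exp_moment_le_window[of 0 t] mass_gt_window[of 0 t] t
    by (simp add: rho1_def exp_minus field_simps) (simp add: distrib_left[symmetric])
  then have d0: "(rho0 has_real_derivative rho1 t) (at t within ?W)"
    by (rule has_field_derivative_transform_within[where d=1]) (use tW rho0_W in auto)
  have "((\<lambda>u. - exp (-u) * (2 * exp (-u) * (exp_moment_le 0 + ?B u) + (mass_gt 0 - ?A u)))
          has_real_derivative rho2 t) (at t within ?W)"
    apply (rule derivative_eq_intros dA dB refl | simp)+
    using exp_moment_le_window[of 0 t] mass_gt_window[of 0 t] t
    by (simp add: rho2_def exp_minus field_simps) (simp add: distrib_left[symmetric])
  then have d1: "(rho1 has_real_derivative rho2 t) (at t within ?W)"
    by (rule has_field_derivative_transform_within[where d=1]) (use tW rho1_W in auto)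
  have "at t within ?W = at t within {0..}"
    by (rule at_within_nhd[of _ "{..<t+1}"]) auto
  with d0 d1 show "(rho0 has_real_derivative rho1 t) (at t within {0..})"
    and "(rho1 has_real_derivative rho2 t) (at t within {0..})" by simp_all
qed

lemma derivs_neg_arg:
  assumes t: "t < 0"
  shows "(rho0 has_real_derivative rho1 t) (at t)"
    and "(rho1 has_real_derivative rho2 t) (at t)"
proof -
  define a where "a = t - 1"
  let ?W = "{a..t/2}"
  let ?A = "window_integral \<rho> a" and ?C = "window_integral (\<lambda>s. \<rho> s * exp (-s)) a"
  have tW: "t \<in> ?W" using t by (simp add: a_def)
  have rho0_W: "rho0 u = exp u * (exp u * (exp_moment_gt a - ?C u) + (mass_le a + ?A u))"
    if "u \<in> ?W" for u
    using that t rho0_neg_arg[of u] exp_moment_gt_window[of a u] mass_le_window[of a u]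
    by simp
  have rho1_W: "rho1 u = exp u * (2 * exp u * (exp_moment_gt a - ?C u) + (mass_le a + ?A u))"
    if "u \<in> ?W" for u
    using that t exp_moment_gt_window[of a u] mass_le_window[of a u] by (simp add: rho1_def)
  have "continuous_on ?W (\<lambda>u. exp u * (exp u * (exp_moment_gt a - ?C u) + (mass_le a + ?A u)))"
    by (intro continuous_intros windows_continuous)
  then have "continuous_on ?W rho0"
    by (rule continuous_on_eq) (simp add: rho0_W)
  then have rho0_cont: "continuous (at t within ?W) rho0"
    using tW continuous_on_eq_continuous_within by blast
  note dA = windows_deriv(1)[OF tW rho0_cont]
  note dC = windows_deriv(3)[OF tW rho0_cont]
  have at_t: "exp_moment_gt a = exp_moment_gt t + ?C t" "mass_le t = mass_le a + ?A t"
    using exp_moment_gt_window[of a t] mass_le_window[of a t] by (simp_all add: a_def)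
  have "((\<lambda>u. exp u * (exp u * (exp_moment_gt a - ?C u) + (mass_le a + ?A u)))
          has_real_derivative rho1 t) (at t within ?W)"
    apply (rule derivative_eq_intros dA dC refl | simp)+
    using t by (simp add: at_t rho1_def exp_minus field_simps)
  then have d0: "(rho0 has_real_derivative rho1 t) (at t within ?W)"
    by (rule has_field_derivative_transform_within[where d=1]) (use tW rho0_W in auto)
  have "((\<lambda>u. exp u * (2 * exp u * (exp_moment_gt a - ?C u) + (mass_le a + ?A u)))
          has_real_derivative rho2 t) (at t within ?W)"
    apply (rule derivative_eq_intros dA dC refl | simp)+
    using t by (simp add: at_t rho2_def exp_minus field_simps)
  then have d1: "(rho1 has_real_derivative rho2 t) (at t within ?W)"
    by (rule has_field_derivative_transform_within[where d=1]) (use tW rho1_W in auto)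
  have "at t within ?W = at t"
    by (rule at_within_interior) (use t in \<open>simp add: a_def\<close>)
  with d0 d1 show "(rho0 has_real_derivative rho1 t) (at t)"
    and "(rho1 has_real_derivative rho2 t) (at t)" by simp_all
qed

lemma ode_nonneg_arg: "0 \<le> d \<Longrightarrow> rho2 d = - (2 + exp (- d)) * rho0 d - 3 * rho1 d"
  by (simp add: rho2_def rho1_def rho0_nonneg_arg algebra_simps)

lemma ode_neg_arg: "d < 0 \<Longrightarrow> rho2 d = - (2 + exp d) * rho0 d + 3 * rho1 d"
  by (simp add: rho2_def rho1_def rho0_neg_arg algebra_simps)

end


lemma ladder_stationary_density_prob_density:
  assumes "ladder_stationary_density \<rho>"
  shows "prob_density \<rho>"
proof
  show \<rho>_meas: "\<rho> \<in> borel_measurable borel" and nonneg: "0 \<le> \<rho> x" for x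
    using assms unfolding ladder_stationary_density_def by auto
  have "prob_space (density lborel (\<lambda>x. ennreal (\<rho> x)))"
    using assms unfolding ladder_stationary_density_def ladder_stationary_def by auto
  then have "emeasure (density lborel (\<lambda>x. ennreal (\<rho> x))) UNIV = 1"
    using prob_space.emeasure_space_1 by fastforce
  then have "(\<integral>\<^sup>+x. ennreal (\<rho> x) \<partial>lborel) = 1"
    by (subst (asm) emeasure_density) (use \<rho>_meas in auto)
  then show "integrable lborel \<rho>"
    by (intro integrableI_nonneg) (use \<rho>_meas nonneg in auto)
qed

theorem mainTheorem7:
  fixes \<rho> :: "real \<Rightarrow> real"
  assumes "ladder_stationary_density \<rho>"
  shows "\<exists>\<rho>0 \<rho>1 \<rho>2 :: real \<Rightarrow> real.
    (AE d in lborel. \<rho> d = \<rho>0 d) \<and>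
    (\<forall>d::real. d < 0 \<longrightarrow>
       (\<rho>0 has_real_derivative \<rho>1 d) (at d) \<and>
       (\<rho>1 has_real_derivative \<rho>2 d) (at d) \<and>
       \<rho>2 d = - (2 + exp d) * \<rho>0 d + 3 * \<rho>1 d) \<and>
    (\<forall>d::real. d \<ge> 0 \<longrightarrow>
       (\<rho>0 has_real_derivative \<rho>1 d) (at d within {0..}) \<and>
       (\<rho>1 has_real_derivative \<rho>2 d) (at d within {0..}) \<and>
       \<rho>2 d = - (2 + exp (- d)) * \<rho>0 d - 3 * \<rho>1 d)"
proof -
  interpret prob_density \<rho>
    using assms by (rule ladder_stationary_density_prob_density)
  have "AE s in lborel. \<rho> s = rho0 s"
    using assms unfolding ladder_stationary_density_def by (intro stationary_fixed_point) simp
  then interpret stationary_density \<rho>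
    by unfold_locales
  show ?thesis
    using fixed_point derivs_neg_arg derivs_nonneg_arg ode_neg_arg ode_nonneg_arg by blast
qed

end
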